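(* Let $S$ be a random walk on $\mathbb{Z}^2$ with symmetric, sub-Gaussian increments and $\mathsf c$ as in the context. For any $h\ge3$, $t\ge0$, $s\in(0,1]$, $L\in\mathbb{N}$, $f:\mathbb{Z}^2\to\mathbb{R}$ and $p\in(1,\infty)$, with $\mathscr C:=\mathsf c\,e^{2\mathsf ct^2L}$, $$\max_{\substack{J\text{ pair}\\ I\ne*,\ I\not\supseteq J}}\Big\|\widehat{\mathsf q}^{|f|,I}_L\tfrac{\mathcal V^J_s}{\mathcal W_t}\Big\|_{\ell^p}\le36^{1/p}\,\mathscr C^h\,\frac L{s^{2/p}}\Big\|\frac f{w_t}\Big\|_{\ell^\infty}^2\Big\|\frac f{w_t}\Big\|_{\ell^p}^{h-2}.$$
   Context: Walk assumption: $q_1(x)=q_1(-x)$ and $\exists c>0$ with $\sum_xe^{tx^a}q_1(x)\le e^{ct^2/2}$ for all $t\in\mathbb{R}$, $a=1,2$. $q_n(x):=\mathrm{P}(S_n=x\mid S_0=0)$, $q^f_n(x):=\sum_zq_n(x-z)f(z)$. $\mathsf c\in[1,\infty)$ is a constant such that for all $t\ge0$, $n\in\mathbb{N}$, $a=1,2$: $\sum_xe^{tx^a}q_n(x)\le e^{\mathsf ct^2n/2}$, $\sum_xe^{tx^a}q_n(x)^2/q_{2n}(0)\le e^{\mathsf ct^2n/2}$, $\sum_xe^{t|x|}q_n(x)\le\mathsf ce^{2\mathsf ct^2n}$, $\sup_xe^{t|x|}q_n(x)\le\mathsf ce^{2\mathsf ct^2n}/n$. Weights: $w_t(x):=e^{-t|x|}$,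 $\mathcal W_t(\mathbf x):=\prod_iw_t(x^i)$; for a pair $J=\{\{a,b\}\}\cup\{\{c\}:c\ne a,b\}$, $\mathcal V^J_s(\mathbf x):=e^{-s|x^a-x^b|}$. Partitions $I\vdash\{1,..,h\}$, $*$ = all singletons; $\mathbf x\sim I$: $x^a=x^b$ for $a,b$ in a common block, $x^a\ne x^b$ for $a,b$ in distinct blocks of size $\ge2$. $I\not\supseteq J$ (for $J$ the pair with doubleton $\{a,b\}$) means no block of $I$ contains $\{a,b\}$. $\mathsf q^{f,I}_n(\mathbf x):=\mathbf 1_{\{\mathbf x\sim I\}}\prod_iq^f_n(x^i)$, $\widehat{\mathsf q}^{f,I}_L:=\sum_{n=1}^L\mathsf q^{f,I}_n$; products with weights are pointwise. *)

theory Defs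
  imports "HOL-Analysis.Analysis" "HOL-Library.Disjoint_Sets"
begin

type_synonym pt = "int \<times> int"

definition enorm :: "pt \<Rightarrow> real" where
  "enorm z = sqrt ((real_of_int (fst z))\<^sup>2 + (real_of_int (snd z))\<^sup>2)"

definition coord :: "nat \<Rightarrow> pt \<Rightarrow> real" where
  "coord a z = (if a = 1 then real_of_int (fst z) else real_of_int (snd z))"

text \<open>n-step transition kernel q_n(x) = P(S_n = x | S_0 = 0) of the random walk
  with step distribution q1 (n-fold convolution power).\<close>
fun qn :: "(pt \<Rightarrow> real) \<Rightarrow> nat \<Rightarrow> pt \<Rightarrow> real" where
  "qn q1 0 x = (if x = (0, 0) then 1 else 0)"
| "qn q1 (Suc n) x = (\<Sum>\<^sub>\<infinity>z. qn q1 n (x - z) * q1 z)"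

definition qf :: "(pt \<Rightarrow> real) \<Rightarrow> nat \<Rightarrow> (pt \<Rightarrow> real) \<Rightarrow> pt \<Rightarrow> real" where
  "qf q1 n f x = (\<Sum>\<^sub>\<infinity>z. qn q1 n (x - z) * f z)"

definition w :: "real \<Rightarrow> pt \<Rightarrow> real" where
  "w t z = exp (- t * enorm z)"

text \<open>Points x = (x^1,...,x^h) are functions on {1..h} (extensional).\<close>
definition WW :: "nat \<Rightarrow> real \<Rightarrow> (nat \<Rightarrow> pt) \<Rightarrow> real" where
  "WW h t x = (\<Prod>i\<in>{1..h}. w t (x i))"

text \<open>V^J_s for the pair J with doubleton {a,b}.\<close>
definition VV :: "nat \<Rightarrow> nat \<Rightarrow> real \<Rightarrow> (nat \<Rightarrow> pt) \<Rightarrow> real" where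
  "VV a b s x = exp (- s * enorm (x a - x b))"

definition singletons :: "nat \<Rightarrow> nat set set" where
  "singletons h = {{i} | i. i \<in> {1..h}}"

definition sim :: "nat set set \<Rightarrow> (nat \<Rightarrow> pt) \<Rightarrow> bool" where
  "sim I x \<longleftrightarrow>
     (\<forall>B\<in>I. \<forall>a\<in>B. \<forall>b\<in>B. x a = x b) \<and>
     (\<forall>B1\<in>I. \<forall>B2\<in>I. B1 \<noteq> B2 \<longrightarrow> card B1 \<ge> 2 \<longrightarrow> card B2 \<ge> 2 \<longrightarrow>
        (\<forall>a\<in>B1. \<forall>b\<in>B2. x a \<noteq> x b))"

definition qI :: "(pt \<Rightarrow> real) \<Rightarrow> nat \<Rightarrow> (pt \<Rightarrow> real) \<Rightarrow> nat set set \<Rightarrow> nat \<Rightarrow> (nat \<Rightarrow> pt) \<Rightarrow> real" where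
  "qI q1 h f I n x = (if sim I x then (\<Prod>i\<in>{1..h}. qf q1 n f (x i)) else 0)"

definition qhat :: "(pt \<Rightarrow> real) \<Rightarrow> nat \<Rightarrow> (pt \<Rightarrow> real) \<Rightarrow> nat set set \<Rightarrow> nat \<Rightarrow> (nat \<Rightarrow> pt) \<Rightarrow> real" where
  "qhat q1 h f I L x = (\<Sum>n = 1..L. qI q1 h f I n x)"

definition lpnorm :: "real \<Rightarrow> 'a set \<Rightarrow> ('a \<Rightarrow> real) \<Rightarrow> ennreal" where
  "lpnorm p A g = (let S = (\<integral>\<^sup>+ x. ennreal (\<bar>g x\<bar> powr p) \<partial>count_space A)
                   in if S = top then top else ennreal (enn2real S powr (1 / p)))"

definition linfnorm :: "'a set \<Rightarrow> ('a \<Rightarrow> real) \<Rightarrow> ennreal" where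
  "linfnorm A g = (SUP x\<in>A. ennreal \<bar>g x\<bar>)"

end

theory Submission
  imports Defs
begin

(* Write g_n = q_n^{|f|} / w_t. Since w_t(y) >= w_t(y - z) w_t(z), g_n is dominated by the
   convolution of |f| / w_t with the tilted kernel e^{t|u|} q_n(u), whose mass is at most
   C = cc e^{2 cc t^2 L}; Young's inequality then gives sup g_n <= C ||f/w_t||_inf and
   ||g_n||_p <= C ||f/w_t||_p. On {x ~ I} with I not all singletons, some coordinate x^j with
   j not in {a, b} equals another coordinate x^k. Summing the p-th power of the n-th summand
   over x^j therefore costs only (sup g_n)^p, summing over x^a against e^{-sp|x^a - x^b|} costs
   (sup g_n)^p sum_u e^{-sp|u|} <= (sup g_n)^p 36/s^2, and each of the other h - 2 coordinates
   costs ||g_n||_p^p. Finally (a_1 + ... + a_L)^p <= L^(p-1) (a_1^p + ... + a_L^p). *)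

lemma nn_integral_count_space_eq_infsum:
  fixes f :: "'a \<Rightarrow> real"
  assumes "f summable_on A" "\<And>x. x \<in> A \<Longrightarrow> f x \<ge> 0"
  shows "(\<integral>\<^sup>+x. f x \<partial>count_space A) = ennreal (infsum f A)"
proof -
  have "(\<lambda>x. norm (f x)) summable_on A"
    using assms summable_on_cong[of A "\<lambda>x. norm (f x)" f] by simp
  then have "Infinite_Set_Sum.abs_summable_on f A"
    using abs_summable_equivalent by blast
  then show ?thesis
    using assms(2) by (simp add: nn_integral_conv_infsetsum infsetsum_infsum)
qed

lemma infsum_le_nn_integral_count_space:
  fixes f :: "'a \<Rightarrow> real"
  assumes "\<And>x. x \<in> A \<Longrightarrow> f x \<ge> 0"
  shows "ennreal (infsum f A) \<le> (\<integral>\<^sup>+x. f x \<partial>count_space A)"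
proof (cases "f summable_on A")
  case True
  then show ?thesis by (simp add: nn_integral_count_space_eq_infsum assms)
qed (simp add: infsum_not_exists)

lemma nn_integral_count_space_reflect:
  fixes g :: "'a::group_add \<Rightarrow> ennreal"
  shows "(\<integral>\<^sup>+u. g (v - u) \<partial>count_space UNIV) = (\<integral>\<^sup>+u. g u \<partial>count_space UNIV)"
  by (rule nn_integral_bij_count_space, rule bij_betwI[where g = "\<lambda>u. - u + v"])
    (auto simp: algebra_simps)

lemma nn_integral_count_space_translate:
  fixes g :: "'a::group_add \<Rightarrow> ennreal"
  shows "(\<integral>\<^sup>+u. g (u - v) \<partial>count_space UNIV) = (\<integral>\<^sup>+u. g u \<partial>count_space UNIV)"
  by (rule nn_integral_bij_count_space, rule bij_betwI[where g = "\<lambda>u. u + v"]) auto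

lemma nn_integral_count_space_Times:
  assumes "countable A" "countable B"
  shows "(\<integral>\<^sup>+z. G z \<partial>count_space (A \<times> B))
       = (\<integral>\<^sup>+a. \<integral>\<^sup>+b. G (a, b) \<partial>count_space B \<partial>count_space A)"
proof -
  have "(\<integral>\<^sup>+a. \<integral>\<^sup>+b. G (a, b) \<partial>count_space B \<partial>count_space A)
      = (\<integral>\<^sup>+z. G z \<partial>(count_space A \<Otimes>\<^sub>M count_space B))"
    by (rule sigma_finite_measure.nn_integral_fst[OF sigma_finite_measure_count_space_countable])
      (simp_all add: pair_measure_countable assms)
  then show ?thesis
    by (simp add: pair_measure_countable assms)
qed

lemma product_sigma_finite_count_space:
  "product_sigma_finite (\<lambda>_::'i. count_space (UNIV :: 'b::countable set))"
  by (simp add: product_sigma_finite_def sigma_finite_measure_count_space)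

lemma nn_integral_count_space_PiE_insert:
  fixes F :: "('i \<Rightarrow> 'b::countable) \<Rightarrow> ennreal"
  assumes "finite D" "i \<notin> D"
  shows "(\<integral>\<^sup>+x. F x \<partial>count_space (PiE (insert i D) (\<lambda>_. UNIV)))
       = (\<integral>\<^sup>+u. \<integral>\<^sup>+y. F (y(i := u)) \<partial>count_space (PiE D (\<lambda>_. UNIV)) \<partial>count_space UNIV)"
  using product_sigma_finite.product_nn_integral_insert_rev[OF product_sigma_finite_count_space,
      of D i F] assms
  by (simp add: count_space_PiM_finite)

lemma nn_integral_count_space_PiE_prod:
  fixes \<phi> :: "'i \<Rightarrow> 'b::countable \<Rightarrow> ennreal"
  assumes "finite D"
  shows "(\<integral>\<^sup>+x. (\<Prod>i\<in>D. \<phi> i (x i)) \<partial>count_space (PiE D (\<lambda>_. UNIV)))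
       = (\<Prod>i\<in>D. \<integral>\<^sup>+u. \<phi> i u \<partial>count_space UNIV)"
  using product_sigma_finite.product_nn_integral_prod[OF product_sigma_finite_count_space, of D \<phi>]
    assms
  by (simp add: count_space_PiM_finite)

section \<open>Jensen's and Young's inequalities\<close>

lemma powr_tangent_le:
  fixes p u m :: real
  assumes p: "p > 1" and "u \<ge> 0" "m \<ge> 0"
  shows "p * m powr (p - 1) * u \<le> u powr p + (p - 1) * m powr p"
proof -
  have "p / (p - 1) > 1" "1 / p + 1 / (p / (p - 1)) = 1"
    using p by (simp_all add: field_simps)
  then have "u * m powr (p - 1) \<le> u powr p / p + (m powr (p - 1)) powr (p / (p - 1)) / (p / (p - 1))"
    using Youngs_inequality[of p "p / (p - 1)" u "m powr (p - 1)"] assms by simp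
  also have "(m powr (p - 1)) powr (p / (p - 1)) = m powr p"
    using p by (simp add: powr_powr)
  finally show ?thesis
    using p by (simp add: field_simps)
qed

lemma nn_integral_tangent_le:
  fixes k F :: "'a \<Rightarrow> real"
  assumes p: "p > 1" and k: "\<And>z. z \<in> A \<Longrightarrow> k z \<ge> 0" and F: "\<And>z. z \<in> A \<Longrightarrow> F z \<ge> 0"
    and K: "(\<integral>\<^sup>+z. k z \<partial>count_space A) = ennreal K" "K \<ge> 0" and m: "m \<ge> 0"
  shows "ennreal (p * m powr (p - 1)) * (\<integral>\<^sup>+z. k z * F z \<partial>count_space A)
       \<le> (\<integral>\<^sup>+z. k z * F z powr p \<partial>count_space A) + ennreal ((p - 1) * m powr p * K)"
proof -
  have "ennreal (p * m powr (p - 1)) * (\<integral>\<^sup>+z. k z * F z \<partial>count_space A)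
      = (\<integral>\<^sup>+z. k z * (p * m powr (p - 1) * F z) \<partial>count_space A)"
    using p k F by (subst nn_integral_cmult[symmetric])
      (auto intro!: nn_integral_cong simp: ennreal_mult[symmetric] mult_ac)
  also have "\<dots> \<le> (\<integral>\<^sup>+z. k z * F z powr p + ennreal ((p - 1) * m powr p) * k z \<partial>count_space A)"
  proof (intro nn_integral_mono)
    fix z assume "z \<in> space (count_space A)"
    then have z: "z \<in> A" by simp
    have "k z * (p * m powr (p - 1) * F z) \<le> k z * (F z powr p + (p - 1) * m powr p)"
      using powr_tangent_le[OF p F[OF z] m] k[OF z] by (simp add: mult_left_mono)
    then show "ennreal (k z * (p * m powr (p - 1) * F z))
        \<le> ennreal (k z * F z powr p) + ennreal ((p - 1) * m powr p) * ennreal (k z)"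
      using p k[OF z] by (simp add: ennreal_mult[symmetric] ennreal_plus[symmetric] distrib_left mult_ac
          del: ennreal_plus)
  qed
  also have "\<dots> = (\<integral>\<^sup>+z. k z * F z powr p \<partial>count_space A) + ennreal ((p - 1) * m powr p * K)"
    using p K by (simp add: nn_integral_add nn_integral_cmult ennreal_mult)
  finally show ?thesis .
qed

text \<open>Jensen's inequality, via the tangent of \<open>u \<mapsto> u powr p\<close> at the mean \<open>a / K\<close>.\<close>
lemma nn_integral_weighted_powr_le:
  fixes k F :: "'a \<Rightarrow> real"
  assumes p: "p > 1" and k: "\<And>z. z \<in> A \<Longrightarrow> k z \<ge> 0" and F: "\<And>z. z \<in> A \<Longrightarrow> F z \<ge> 0"
    and K: "(\<integral>\<^sup>+z. k z \<partial>count_space A) = ennreal K" "K \<ge> 0"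
    and a: "ennreal a \<le> (\<integral>\<^sup>+z. k z * F z \<partial>count_space A)" "a \<ge> 0"
  shows "ennreal (a powr p) \<le> ennreal (K powr (p - 1)) * (\<integral>\<^sup>+z. k z * F z powr p \<partial>count_space A)"
proof (cases "K = 0")
  case True
  have "k z = 0" if "z \<in> A" for z
    using nn_integral_ge_point[OF that, of "\<lambda>z. ennreal (k z)"] K True k[OF that] by simp
  then have "(\<integral>\<^sup>+z. k z * F z \<partial>count_space A) = (\<integral>\<^sup>+z. 0 \<partial>count_space A)"
    by (intro nn_integral_cong) simp
  then show ?thesis
    using a by simp
next
  case False
  then have K_pos: "K > 0" using K(2) by simp
  define m where "m = a / K"
  have m: "m \<ge> 0" "a = m * K"
    using a(2) K_pos by (simp_all add: m_def)
  define S where "S = (\<integral>\<^sup>+z. k z * F z powr p \<partial>count_space A)"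
  have "ennreal (p * m powr (p - 1) * a) \<le> ennreal (p * m powr (p - 1)) * (\<integral>\<^sup>+z. k z * F z \<partial>count_space A)"
    using a p m by (simp add: ennreal_mult mult_left_mono)
  also have "\<dots> \<le> S + ennreal ((p - 1) * m powr p * K)"
    unfolding S_def by (rule nn_integral_tangent_le[OF p k F K m(1)])
  finally have tangent: "ennreal (p * m powr (p - 1) * a) \<le> S + ennreal ((p - 1) * m powr p * K)" .
  show ?thesis
  proof (cases S)
    case (real Sr)
    have "m powr (p - 1) * m = m powr p"
      using m(1) p by (cases "m = 0") (simp_all add: powr_add[of m "p - 1" 1, simplified])
    then have "p * (m powr p * K) \<le> Sr + (p - 1) * (m powr p * K)"
      using tangent real p m K(2) by (simp add: m(2) ennreal_plus[symmetric] mult_ac del: ennreal_plus)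
    then have mK: "m powr p * K \<le> Sr"
      by (simp add: algebra_simps)
    have "a powr p = K powr (p - 1) * (m powr p * K)"
      using m K_pos by (simp add: powr_mult powr_diff)
    also have "\<dots> \<le> K powr (p - 1) * Sr"
      using mK by (simp add: mult_left_mono)
    finally show ?thesis
      using real by (simp add: S_def[symmetric] ennreal_mult[symmetric] ennreal_leI)
  next
    case top
    then show ?thesis
      using K_pos by (simp add: S_def[symmetric] ennreal_mult_top)
  qed
qed

lemma sum_powr_le:
  fixes a :: "'a \<Rightarrow> real"
  assumes "p > 1" "finite A" "\<And>i. i \<in> A \<Longrightarrow> a i \<ge> 0"
  shows "(\<Sum>i\<in>A. a i) powr p \<le> real (card A) powr (p - 1) * (\<Sum>i\<in>A. a i powr p)"
proof -
  have "ennreal ((\<Sum>i\<in>A. a i) powr p)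
      \<le> ennreal (real (card A) powr (p - 1)) * (\<integral>\<^sup>+i. 1 * a i powr p \<partial>count_space A)"
    using assms
    by (intro nn_integral_weighted_powr_le)
      (simp_all add: nn_integral_count_space_finite sum_nonneg ennreal_of_nat_eq_real_of_nat)
  then show ?thesis
    using assms by (simp add: nn_integral_count_space_finite sum_nonneg ennreal_mult[symmetric])
qed

lemma power_powr_eq:
  fixes x :: real
  assumes "x \<ge> 0"
  shows "(x ^ n) powr a = (x powr a) ^ n"
  using assms by (induction n) (simp_all add: powr_mult)

lemma nn_integral_convolution_powr_le:
  fixes k F g :: "'a::{countable, group_add} \<Rightarrow> real"
  assumes p: "p > 1" and k: "\<And>u. k u \<ge> 0"
    and K: "(\<integral>\<^sup>+u. k u \<partial>count_space UNIV) = ennreal K" "K \<ge> 0"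
    and F: "\<And>z. F z \<ge> 0" and g: "\<And>y. g y \<ge> 0"
    and conv: "\<And>y. ennreal (g y) \<le> (\<integral>\<^sup>+z. k (y - z) * F z \<partial>count_space UNIV)"
  shows "(\<integral>\<^sup>+y. g y powr p \<partial>count_space UNIV)
       \<le> ennreal (K powr p) * (\<integral>\<^sup>+z. F z powr p \<partial>count_space UNIV)"
proof -
  have Ky: "(\<integral>\<^sup>+z. k (y - z) \<partial>count_space UNIV) = ennreal K" for y
    using nn_integral_count_space_reflect[of "\<lambda>u. ennreal (k u)" y] K(1) by simp
  have "(\<integral>\<^sup>+y. g y powr p \<partial>count_space UNIV)
      \<le> (\<integral>\<^sup>+y. ennreal (K powr (p - 1)) * (\<integral>\<^sup>+z. k (y - z) * F z powr p \<partial>count_space UNIV)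
           \<partial>count_space UNIV)"
  proof (rule nn_integral_mono)
    fix y
    show "ennreal (g y powr p)
        \<le> ennreal (K powr (p - 1)) * (\<integral>\<^sup>+z. k (y - z) * F z powr p \<partial>count_space UNIV)"
      by (rule nn_integral_weighted_powr_le[OF p k F Ky K(2) conv g])
  qed
  also have "\<dots> = ennreal (K powr (p - 1))
      * (\<integral>\<^sup>+z. \<integral>\<^sup>+y. ennreal (k (y - z)) * ennreal (F z powr p) \<partial>count_space UNIV \<partial>count_space UNIV)"
    using nn_integral_count_space_nn_integral[of UNIV "\<lambda>z y. ennreal (k (y - z) * F z powr p)"
        "count_space UNIV"]
    by (simp add: nn_integral_cmult ennreal_mult k)
  also have "\<dots> = ennreal (K powr (p - 1)) * (\<integral>\<^sup>+z. ennreal K * F z powr p \<partial>count_space UNIV)"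
    using nn_integral_count_space_translate[of "\<lambda>u. ennreal (k u)"] K(1)
    by (simp add: nn_integral_multc)
  also have "\<dots> = ennreal (K powr p) * (\<integral>\<^sup>+z. F z powr p \<partial>count_space UNIV)"
    using K(2) by (simp add: ennreal_mult nn_integral_cmult mult.assoc powr_add[of K "p - 1" 1, simplified])
  finally show ?thesis .
qed

lemma convolution_le_mult_sup:
  fixes k F :: "'a::group_add \<Rightarrow> real"
  assumes k: "\<And>u. k u \<ge> 0" and K: "(\<integral>\<^sup>+u. k u \<partial>count_space UNIV) = ennreal K" "K \<ge> 0"
    and F: "\<And>z. F z \<le> M" "M \<ge> 0"
    and conv: "ennreal (g y) \<le> (\<integral>\<^sup>+z. k (y - z) * F z \<partial>count_space UNIV)"
  shows "g y \<le> K * M"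
proof -
  note conv
  also have "(\<integral>\<^sup>+z. k (y - z) * F z \<partial>count_space UNIV)
      \<le> (\<integral>\<^sup>+z. ennreal (k (y - z)) * ennreal M \<partial>count_space UNIV)"
    using k F by (intro nn_integral_mono) (simp add: ennreal_mult[symmetric] mult_left_mono)
  also have "\<dots> = ennreal (K * M)"
    using nn_integral_count_space_reflect[of "\<lambda>u. ennreal (k u)" y] K F(2)
    by (simp add: ennreal_mult nn_integral_multc)
  finally show ?thesis
    using K(2) F(2) by (simp add: ennreal_le_iff)
qed

section \<open>Exponential sums over the lattice\<close>

lemma geometric_int_le:
  fixes \<alpha> :: real
  assumes "\<alpha> > 0"
  shows "(\<integral>\<^sup>+(m::int). exp (-\<alpha> * \<bar>m\<bar>) \<partial>count_space UNIV) \<le> ennreal (2 / (1 - exp (-\<alpha>)))"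
proof -
  define g where "g m = ennreal (exp (-\<alpha> * \<bar>m\<bar>))" for m :: int
  have "(\<integral>\<^sup>+m. g m \<partial>count_space UNIV)
      \<le> (\<integral>\<^sup>+m. g m * indicator {0..} m + g (- m) * indicator {0..} (- m) \<partial>count_space UNIV)"
    by (intro nn_integral_mono) (auto simp: g_def indicator_def)
  also have "\<dots> = 2 * (\<integral>\<^sup>+m. g m * indicator {0..} m \<partial>count_space UNIV)"
    using nn_integral_count_space_reflect[of "\<lambda>m. g m * indicator {0..} m" 0]
    by (simp add: nn_integral_add mult_2)
  also have "(\<integral>\<^sup>+m. g m * indicator {0..} m \<partial>count_space UNIV) = (\<integral>\<^sup>+(n::nat). g (int n) \<partial>count_space UNIV)"
  proof -
    have "range int = {0..}"
      using zero_le_imp_eq_int by fastforce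
    then show ?thesis
      by (simp add: nn_integral_count_space_indicator[symmetric] nn_integral_bij_count_space
          bij_betw_def)
  qed
  also have "\<dots> = ennreal (1 / (1 - exp (-\<alpha>)))"
  proof -
    have "g (int n) = ennreal (exp (-\<alpha>) ^ n)" for n
      by (simp add: g_def exp_of_nat_mult[symmetric])
    then show ?thesis
      using assms by (simp add: nn_integral_count_space_nat suminf_ennreal_eq geometric_sums)
  qed
  finally show ?thesis
    using assms ennreal_mult[of 2 "1 / (1 - exp (-\<alpha>))"] by (simp add: g_def)
qed

lemma enorm_eq_norm: "enorm z = norm (real_of_int (fst z), real_of_int (snd z))"
  by (simp add: enorm_def norm_Pair)

lemma enorm_nonneg: "enorm z \<ge> 0"
  by (simp add: enorm_def)

lemma enorm_triangle: "enorm (x + y) \<le> enorm x + enorm y"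
  using norm_triangle_ineq[of "(real_of_int (fst x), real_of_int (snd x))"
      "(real_of_int (fst y), real_of_int (snd y))"]
  by (simp add: enorm_eq_norm)

lemma abs_fst_plus_abs_snd_le_enorm: "\<bar>real_of_int (fst z)\<bar> + \<bar>real_of_int (snd z)\<bar> \<le> 2 * enorm z"
proof -
  have "\<bar>real_of_int (fst z)\<bar> \<le> enorm z" "\<bar>real_of_int (snd z)\<bar> \<le> enorm z"
    unfolding enorm_def by (simp_all add: real_le_rsqrt)
  then show ?thesis by simp
qed

lemma two_div_one_minus_exp_half_le:
  fixes s :: real
  assumes s: "0 < s" "s \<le> 1"
  shows "2 / (1 - exp (- (s / 2))) \<le> 6 / s"
proof -
  have "s / 3 \<le> (s / 2) / (1 + s / 2)"
    using s by (simp add: field_simps)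
  also have "\<dots> \<le> 1 - exp (- (s / 2))"
    using exp_ge_add_one_self[of "s / 2"] s by (simp add: exp_minus field_simps)
  finally have "2 / (1 - exp (- (s / 2))) \<le> 2 / (s / 3)"
    using s by (intro divide_left_mono mult_pos_pos) auto
  then show ?thesis
    by simp
qed

lemma lattice_exp_enorm_le:
  fixes s \<sigma> :: real
  assumes s: "0 < s" "s \<le> 1" and \<sigma>: "s \<le> \<sigma>"
  shows "(\<integral>\<^sup>+(u::pt). exp (-\<sigma> * enorm u) \<partial>count_space UNIV) \<le> ennreal (36 / s\<^sup>2)"
proof -
  define \<alpha> where "\<alpha> = s / 2"
  define e where "e m = ennreal (exp (-\<alpha> * \<bar>m\<bar>))" for m :: int
  have "ennreal (exp (-\<sigma> * enorm u)) \<le> e (fst u) * e (snd u)" for u :: pt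
  proof -
    have "\<alpha> * (\<bar>real_of_int (fst u)\<bar> + \<bar>real_of_int (snd u)\<bar>) \<le> s * enorm u"
      using mult_left_mono[OF abs_fst_plus_abs_snd_le_enorm[of u], of \<alpha>] s by (simp add: \<alpha>_def)
    also have "\<dots> \<le> \<sigma> * enorm u"
      using \<sigma> enorm_nonneg[of u] by (rule mult_right_mono)
    finally show ?thesis
      by (simp add: e_def ennreal_mult[symmetric] exp_add[symmetric] algebra_simps)
  qed
  then have "(\<integral>\<^sup>+u. exp (-\<sigma> * enorm u) \<partial>count_space UNIV)
      \<le> (\<integral>\<^sup>+u. e (fst u) * e (snd u) \<partial>count_space UNIV)"
    by (simp add: nn_integral_mono)
  also have "\<dots> = (\<integral>\<^sup>+m. e m \<partial>count_space UNIV) * (\<integral>\<^sup>+m. e m \<partial>count_space UNIV)"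
    using nn_integral_count_space_Times[of "UNIV :: int set" "UNIV :: int set" "\<lambda>u. e (fst u) * e (snd u)"]
    by (simp add: nn_integral_cmult nn_integral_multc)
  also have "\<dots> \<le> ennreal (6 / s) * ennreal (6 / s)"
  proof -
    have "(\<integral>\<^sup>+m. e m \<partial>count_space UNIV) \<le> ennreal (6 / s)"
      using geometric_int_le[of \<alpha>] two_div_one_minus_exp_half_le[OF s] s unfolding e_def \<alpha>_def
      by (auto intro: order_trans ennreal_leI)
    then show ?thesis
      by (intro mult_mono) auto
  qed
  also have "\<dots> = ennreal (36 / s\<^sup>2)"
    using s by (simp add: ennreal_mult[symmetric] power2_eq_square)
  finally show ?thesis .
qed

section \<open>Sums over configurations with a glued coordinate\<close>

lemma nn_integral_PiE_pair_kernel_le: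
  fixes \<Gamma> E :: "'b::{countable, group_add} \<Rightarrow> ennreal"
  assumes D: "finite D" "a \<notin> D" "b \<in> D"
    and \<Gamma>: "\<And>y. \<Gamma> y \<le> B" "(\<integral>\<^sup>+y. \<Gamma> y \<partial>count_space UNIV) \<le> G"
    and E: "\<And>v. (\<integral>\<^sup>+u. E (u - v) \<partial>count_space UNIV) \<le> Eb"
  shows "(\<integral>\<^sup>+x. (\<Prod>i\<in>insert a D. \<Gamma> (x i)) * E (x a - x b) \<partial>count_space (PiE (insert a D) (\<lambda>_. UNIV)))
       \<le> B * Eb * G ^ card D"
proof -
  have "(\<integral>\<^sup>+x. (\<Prod>i\<in>insert a D. \<Gamma> (x i)) * E (x a - x b) \<partial>count_space (PiE (insert a D) (\<lambda>_. UNIV)))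
      = (\<integral>\<^sup>+u. \<integral>\<^sup>+y. (\<Prod>i\<in>D. \<Gamma> (y i)) * (\<Gamma> u * E (u - y b))
           \<partial>count_space (PiE D (\<lambda>_. UNIV)) \<partial>count_space UNIV)"
  proof -
    have "(\<Prod>i\<in>D. \<Gamma> ((y(a := u)) i)) = (\<Prod>i\<in>D. \<Gamma> (y i))" for y u
      using D(2) by (intro prod.cong) auto
    moreover have "b \<noteq> a"
      using D by auto
    ultimately show ?thesis
      using D by (simp add: nn_integral_count_space_PiE_insert mult_ac)
  qed
  also have "\<dots> = (\<integral>\<^sup>+y. (\<Prod>i\<in>D. \<Gamma> (y i)) * (\<integral>\<^sup>+u. \<Gamma> u * E (u - y b) \<partial>count_space UNIV)
      \<partial>count_space (PiE D (\<lambda>_. UNIV)))"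
    using nn_integral_count_space_nn_integral[of "PiE D (\<lambda>_. UNIV)"
        "\<lambda>y u. (\<Prod>i\<in>D. \<Gamma> (y i)) * (\<Gamma> u * E (u - y b))" "count_space UNIV"] D(1)
    by (simp add: countable_PiE nn_integral_cmult)
  also have "\<dots> \<le> (\<integral>\<^sup>+y. (\<Prod>i\<in>D. \<Gamma> (y i)) * (B * Eb) \<partial>count_space (PiE D (\<lambda>_. UNIV)))"
  proof (intro nn_integral_mono mult_left_mono)
    fix y :: "'a \<Rightarrow> 'b"
    have "(\<integral>\<^sup>+u. \<Gamma> u * E (u - y b) \<partial>count_space UNIV) \<le> (\<integral>\<^sup>+u. B * E (u - y b) \<partial>count_space UNIV)"
      using \<Gamma>(1) by (intro nn_integral_mono mult_right_mono) auto
    also have "\<dots> \<le> B * Eb"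
      using E by (simp add: nn_integral_cmult mult_left_mono)
    finally show "(\<integral>\<^sup>+u. \<Gamma> u * E (u - y b) \<partial>count_space UNIV) \<le> B * Eb" .
  qed simp
  also have "\<dots> = (\<Prod>i\<in>D. \<integral>\<^sup>+u. \<Gamma> u \<partial>count_space UNIV) * (B * Eb)"
    using D(1) nn_integral_count_space_PiE_prod[of D "\<lambda>_. \<Gamma>"] by (simp add: nn_integral_multc)
  also have "\<dots> \<le> G ^ card D * (B * Eb)"
    using \<Gamma>(2) by (simp add: mult_right_mono power_mono)
  finally show ?thesis
    by (simp add: mult_ac)
qed

text \<open>Summing out the glued coordinate \<open>j\<close> costs only the supremum \<open>B\<close>, summing out \<open>a\<close>
  against the kernel \<open>E\<close> costs \<open>B * Eb\<close>, and each remaining coordinate costs \<open>G\<close>.\<close>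
lemma nn_integral_PiE_glued_pair_le:
  fixes \<Gamma> E :: "'b::{countable, group_add} \<Rightarrow> ennreal"
  assumes D: "finite D" "{j, k, a, b} \<subseteq> D" "j \<noteq> k" "j \<notin> {a, b}" "a \<noteq> b"
    and \<Gamma>: "\<And>y. \<Gamma> y \<le> B" "(\<integral>\<^sup>+y. \<Gamma> y \<partial>count_space UNIV) \<le> G"
    and E: "\<And>v. (\<integral>\<^sup>+u. E (u - v) \<partial>count_space UNIV) \<le> Eb"
  shows "(\<integral>\<^sup>+x. indicator {x k} (x j) * (\<Prod>i\<in>D. \<Gamma> (x i)) * E (x a - x b)
           \<partial>count_space (PiE D (\<lambda>_. UNIV)))
       \<le> B * B * Eb * G ^ (card D - 2)"
proof -
  define D' where "D' = D - {j}"
  have D': "D = insert j D'" "j \<notin> D'" "finite D'" "{k, a, b} \<subseteq> D'"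
    using D by (auto simp: D'_def)
  define \<Psi> where "\<Psi> y = (\<Prod>i\<in>D'. \<Gamma> (y i)) * E (y a - y b)" for y :: "'a \<Rightarrow> 'b"
  have "(\<integral>\<^sup>+x. indicator {x k} (x j) * (\<Prod>i\<in>D. \<Gamma> (x i)) * E (x a - x b)
           \<partial>count_space (PiE D (\<lambda>_. UNIV)))
      = (\<integral>\<^sup>+u. \<integral>\<^sup>+y. \<Psi> y * (\<Gamma> u * indicator {y k} u)
           \<partial>count_space (PiE D' (\<lambda>_. UNIV)) \<partial>count_space UNIV)"
  proof -
    have "(\<Prod>i\<in>D'. \<Gamma> ((y(j := u)) i)) = (\<Prod>i\<in>D'. \<Gamma> (y i))" for y u
      using D'(2) by (intro prod.cong) auto
    moreover have "a \<noteq> j" "b \<noteq> j"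
      using D by auto
    ultimately show ?thesis
      using D D' by (simp add: nn_integral_count_space_PiE_insert \<Psi>_def mult_ac)
  qed
  also have "\<dots> = (\<integral>\<^sup>+y. \<Psi> y * \<Gamma> (y k) \<partial>count_space (PiE D' (\<lambda>_. UNIV)))"
    using nn_integral_count_space_nn_integral[of "PiE D' (\<lambda>_. UNIV)"
        "\<lambda>y u. \<Psi> y * (\<Gamma> u * indicator {y k} u)" "count_space UNIV"] D'(3)
    by (simp add: countable_PiE nn_integral_cmult)
  also have "\<dots> \<le> (\<integral>\<^sup>+y. \<Psi> y * B \<partial>count_space (PiE D' (\<lambda>_. UNIV)))"
    using \<Gamma>(1) by (intro nn_integral_mono mult_left_mono) auto
  also have "\<dots> = (\<integral>\<^sup>+y. \<Psi> y \<partial>count_space (PiE D' (\<lambda>_. UNIV))) * B"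
    by (rule nn_integral_multc) simp
  also have "\<dots> \<le> B * Eb * G ^ (card D - 2) * B"
  proof -
    have "D' = insert a (D' - {a})" "card (D' - {a}) = card D - 2"
      using D D' by (auto simp: card_Diff_singleton)
    then show ?thesis
      using nn_integral_PiE_pair_kernel_le[of "D' - {a}" a b \<Gamma> B G E Eb] D' D(5) \<Gamma> E
      by (simp add: \<Psi>_def mult_right_mono)
  qed
  finally show ?thesis
    by (simp add: mult_ac)
qed

section \<open>The tilted transition kernel\<close>

lemma qn_nonneg:
  assumes "\<And>x. q1 x \<ge> 0"
  shows "qn q1 n x \<ge> 0"
  by (induction n arbitrary: x) (simp_all add: infsum_nonneg assms)

lemma qf_abs_nonneg:
  assumes "\<And>x. q1 x \<ge> 0"
  shows "qf q1 n (\<lambda>z. \<bar>f z\<bar>) y \<ge> 0"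
  by (simp add: qf_def infsum_nonneg qn_nonneg assms)

lemma qf_div_w_le_convolution:
  assumes q1: "\<And>x. q1 x \<ge> 0" and t: "t \<ge> 0"
  shows "ennreal (qf q1 n (\<lambda>z. \<bar>f z\<bar>) y / w t y)
       \<le> (\<integral>\<^sup>+z. exp (t * enorm (y - z)) * qn q1 n (y - z) * \<bar>f z / w t z\<bar> \<partial>count_space UNIV)"
proof -
  have "ennreal (qf q1 n (\<lambda>z. \<bar>f z\<bar>) y / w t y)
      = ennreal (exp (t * enorm y)) * ennreal (\<Sum>\<^sub>\<infinity>z. qn q1 n (y - z) * \<bar>f z\<bar>)"
    by (simp add: qf_def w_def exp_minus divide_inverse ennreal_mult[symmetric] infsum_nonneg qn_nonneg q1
        mult.commute)
  also have "\<dots> \<le> ennreal (exp (t * enorm y)) * (\<integral>\<^sup>+z. qn q1 n (y - z) * \<bar>f z\<bar> \<partial>count_space UNIV)"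
    by (intro mult_left_mono infsum_le_nn_integral_count_space) (simp_all add: qn_nonneg q1)
  also have "\<dots> = (\<integral>\<^sup>+z. exp (t * enorm y) * (qn q1 n (y - z) * \<bar>f z\<bar>) \<partial>count_space UNIV)"
    by (simp add: nn_integral_cmult[symmetric] ennreal_mult qn_nonneg q1)
  also have "\<dots> \<le> (\<integral>\<^sup>+z. exp (t * enorm (y - z)) * qn q1 n (y - z) * \<bar>f z / w t z\<bar> \<partial>count_space UNIV)"
  proof (intro nn_integral_mono ennreal_leI)
    fix z
    have "exp (t * enorm y) \<le> exp (t * enorm (y - z)) * exp (t * enorm z)"
      using mult_left_mono[OF enorm_triangle[of "y - z" z] t]
      by (simp add: exp_add[symmetric] distrib_left)
    then have "exp (t * enorm y) * (qn q1 n (y - z) * \<bar>f z\<bar>)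
        \<le> exp (t * enorm (y - z)) * exp (t * enorm z) * (qn q1 n (y - z) * \<bar>f z\<bar>)"
      by (rule mult_right_mono) (simp add: qn_nonneg q1)
    also have "\<dots> = exp (t * enorm (y - z)) * qn q1 n (y - z) * \<bar>f z / w t z\<bar>"
      by (simp add: w_def exp_minus abs_mult divide_inverse)
    finally show "exp (t * enorm y) * (qn q1 n (y - z) * \<bar>f z\<bar>)
        \<le> exp (t * enorm (y - z)) * qn q1 n (y - z) * \<bar>f z / w t z\<bar>" .
  qed
  finally show ?thesis .
qed

lemma qf_div_w_bounds:
  fixes C M :: real
  assumes q1: "\<And>x. q1 x \<ge> 0" and t: "t \<ge> 0" and p: "p > 1"
    and kernel: "(\<lambda>u. exp (t * enorm u) * qn q1 n u) summable_on UNIV"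
      "(\<Sum>\<^sub>\<infinity>u. exp (t * enorm u) * qn q1 n u) \<le> C"
    and M: "\<And>z. \<bar>f z / w t z\<bar> \<le> M"
  shows "qf q1 n (\<lambda>z. \<bar>f z\<bar>) y / w t y \<le> C * M"
    and "(\<integral>\<^sup>+y. (qf q1 n (\<lambda>z. \<bar>f z\<bar>) y / w t y) powr p \<partial>count_space UNIV)
       \<le> ennreal (C powr p) * (\<integral>\<^sup>+z. \<bar>f z / w t z\<bar> powr p \<partial>count_space UNIV)"
proof -
  define k where "k u = exp (t * enorm u) * qn q1 n u" for u
  define K where "K = (\<Sum>\<^sub>\<infinity>u. k u)"
  have k: "k u \<ge> 0" for u
    by (simp add: k_def qn_nonneg q1)
  have K: "(\<integral>\<^sup>+u. k u \<partial>count_space UNIV) = ennreal K" "0 \<le> K" "K \<le> C"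
    using kernel k unfolding K_def k_def
    by (simp_all add: nn_integral_count_space_eq_infsum infsum_nonneg)
  have conv: "ennreal (qf q1 n (\<lambda>z. \<bar>f z\<bar>) y / w t y) \<le> (\<integral>\<^sup>+z. k (y - z) * \<bar>f z / w t z\<bar> \<partial>count_space UNIV)"
    for y using qf_div_w_le_convolution[OF q1 t] by (simp add: k_def)
  have M0: "M \<ge> 0"
    using M[of 0] by linarith
  have "qf q1 n (\<lambda>z. \<bar>f z\<bar>) y / w t y \<le> K * M"
    using convolution_le_mult_sup[OF k K(1,2) M M0 conv] .
  also have "\<dots> \<le> C * M"
    using K(3) M0 by (rule mult_right_mono)
  finally show "qf q1 n (\<lambda>z. \<bar>f z\<bar>) y / w t y \<le> C * M" .
  have "(\<integral>\<^sup>+y. (qf q1 n (\<lambda>z. \<bar>f z\<bar>) y / w t y) powr p \<partial>count_space UNIV)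
      \<le> ennreal (K powr p) * (\<integral>\<^sup>+z. \<bar>f z / w t z\<bar> powr p \<partial>count_space UNIV)"
    by (rule nn_integral_convolution_powr_le[OF p k K(1,2) _ _ conv]) (simp_all add: qf_abs_nonneg q1 w_def)
  also have "\<dots> \<le> ennreal (C powr p) * (\<integral>\<^sup>+z. \<bar>f z / w t z\<bar> powr p \<partial>count_space UNIV)"
    using K p by (intro mult_right_mono ennreal_leI powr_mono2) auto
  finally show "(\<integral>\<^sup>+y. (qf q1 n (\<lambda>z. \<bar>f z\<bar>) y / w t y) powr p \<partial>count_space UNIV)
       \<le> ennreal (C powr p) * (\<integral>\<^sup>+z. \<bar>f z / w t z\<bar> powr p \<partial>count_space UNIV)" .
qed

section \<open>The weighted l^p bound\<close>

lemma partition_glued_index: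
  assumes part: "partition_on {1..h} I" and "I \<noteq> singletons h" and "\<not> (\<exists>B\<in>I. {a, b} \<subseteq> B)"
  obtains j k where "j \<in> {1..h}" "k \<in> {1..h}" "j \<noteq> k" "j \<notin> {a, b}" "\<And>x. sim I x \<Longrightarrow> x j = x k"
proof -
  have blocks: "{} \<notin> I" "\<Union>I = {1..h}"
    using part by (auto simp: partition_on_def)
  have "\<exists>B\<in>I. \<exists>j\<in>B. \<exists>k\<in>B. j \<noteq> k"
  proof (rule ccontr)
    assume no_pair: "\<not> ?thesis"
    have singleton: "\<exists>i. B = {i}" if "B \<in> I" for B
      using that no_pair blocks(1) by (metis all_not_in_conv insertI1 subsetI subset_singletonD)
    have "I = singletons h"
      unfolding singletons_def
    proof (intro set_eqI iffI)
      fix B assume "B \<in> I"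
      then show "B \<in> {{i} | i. i \<in> {1..h}}"
        using singleton blocks(2) by blast
    next
      fix B assume "B \<in> {{i} | i. i \<in> {1..h}}"
      then obtain i where "B = {i}" "i \<in> \<Union>I"
        using blocks(2) by blast
      then show "B \<in> I"
        using singleton by fastforce
    qed
    then show False
      using assms(2) by simp
  qed
  then obtain B j k where B: "B \<in> I" "j \<in> B" "k \<in> B" "j \<noteq> k"
    by blast
  have "j \<in> {1..h}" "k \<in> {1..h}"
    using B blocks(2) by blast+
  moreover have "x j = x k" if "sim I x" for x
    using that B unfolding sim_def by blast
  moreover have "j \<notin> {a, b} \<or> k \<notin> {a, b}"
    using B assms(3) by auto
  ultimately show ?thesis
    using that B(4) by metis
qed

lemma qI_VV_div_WW_powr_le:
  assumes q1: "\<And>x. q1 x \<ge> 0" and glue: "\<And>x. sim I x \<Longrightarrow> x j = x k"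
  shows "ennreal ((qI q1 h (\<lambda>z. \<bar>f z\<bar>) I n x * VV a b s x / WW h t x) powr p)
       \<le> indicator {x k} (x j) * (\<Prod>i\<in>{1..h}. ennreal ((qf q1 n (\<lambda>z. \<bar>f z\<bar>) (x i) / w t (x i)) powr p))
         * ennreal (exp (- (s * p) * enorm (x a - x b)))"
proof (cases "sim I x")
  case True
  have "qI q1 h (\<lambda>z. \<bar>f z\<bar>) I n x * VV a b s x / WW h t x
      = (\<Prod>i\<in>{1..h}. qf q1 n (\<lambda>z. \<bar>f z\<bar>) (x i) / w t (x i)) * exp (- s * enorm (x a - x b))"
    using True by (simp add: qI_def VV_def WW_def prod_dividef)
  then have "(qI q1 h (\<lambda>z. \<bar>f z\<bar>) I n x * VV a b s x / WW h t x) powr p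
      = (\<Prod>i\<in>{1..h}. (qf q1 n (\<lambda>z. \<bar>f z\<bar>) (x i) / w t (x i)) powr p) * exp (- (s * p) * enorm (x a - x b))"
    by (simp add: powr_mult prod_powr_distrib qf_abs_nonneg q1 w_def prod_nonneg exp_powr_real)
  then show ?thesis
    using glue[OF True] by (simp add: ennreal_mult prod_ennreal prod_nonneg)
next
  case False
  then show ?thesis
    by (simp add: qI_def)
qed

lemma nn_integral_qI_powr_le:
  fixes C M SF :: real
  assumes q1: "\<And>x. q1 x \<ge> 0" and t: "t \<ge> 0" and p: "p > 1" and s: "0 < s" "s \<le> 1"
    and kernel: "(\<lambda>u. exp (t * enorm u) * qn q1 n u) summable_on UNIV"
      "(\<Sum>\<^sub>\<infinity>u. exp (t * enorm u) * qn q1 n u) \<le> C"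
    and M: "\<And>z. \<bar>f z / w t z\<bar> \<le> M"
    and SF: "(\<integral>\<^sup>+z. \<bar>f z / w t z\<bar> powr p \<partial>count_space UNIV) = ennreal SF" "SF \<ge> 0"
    and idx: "{j, k, a, b} \<subseteq> {1..h}" "j \<noteq> k" "j \<notin> {a, b}" "a \<noteq> b"
    and glue: "\<And>x. sim I x \<Longrightarrow> x j = x k"
  shows "(\<integral>\<^sup>+x. (qI q1 h (\<lambda>z. \<bar>f z\<bar>) I n x * VV a b s x / WW h t x) powr p
           \<partial>count_space (PiE {1..h} (\<lambda>_. UNIV)))
       \<le> ennreal (((C * M) powr p)\<^sup>2 * (36 / s\<^sup>2) * (C powr p * SF) ^ (h - 2))"
proof -
  let ?g = "\<lambda>y. qf q1 n (\<lambda>z. \<bar>f z\<bar>) y / w t y"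
  note bounds = qf_div_w_bounds[OF q1 t p kernel M]
  have "(\<integral>\<^sup>+x. (qI q1 h (\<lambda>z. \<bar>f z\<bar>) I n x * VV a b s x / WW h t x) powr p
           \<partial>count_space (PiE {1..h} (\<lambda>_. UNIV)))
      \<le> (\<integral>\<^sup>+x. indicator {x k} (x j) * (\<Prod>i\<in>{1..h}. ennreal (?g (x i) powr p))
           * ennreal (exp (- (s * p) * enorm (x a - x b))) \<partial>count_space (PiE {1..h} (\<lambda>_. UNIV)))"
    by (intro nn_integral_mono qI_VV_div_WW_powr_le[OF q1 glue])
  also have "\<dots> \<le> ennreal ((C * M) powr p) * ennreal ((C * M) powr p) * ennreal (36 / s\<^sup>2)
      * ennreal (C powr p * SF) ^ (card {1..h} - 2)"
  proof (rule nn_integral_PiE_glued_pair_le[OF _ idx])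
    show "ennreal (?g y powr p) \<le> ennreal ((C * M) powr p)" for y
      using bounds(1) p by (intro ennreal_leI powr_mono2) (auto simp: qf_abs_nonneg q1 w_def)
    show "(\<integral>\<^sup>+y. ennreal (?g y powr p) \<partial>count_space UNIV) \<le> ennreal (C powr p * SF)"
      using bounds(2) SF by (simp add: ennreal_mult)
    show "(\<integral>\<^sup>+u. ennreal (exp (- (s * p) * enorm (u - v))) \<partial>count_space UNIV) \<le> ennreal (36 / s\<^sup>2)"
      for v
      using lattice_exp_enorm_le[OF s, of "s * p"] p s
        nn_integral_count_space_translate[of "\<lambda>u. ennreal (exp (- (s * p) * enorm u))" v]
      by simp
  qed simp
  also have "\<dots> = ennreal (((C * M) powr p)\<^sup>2 * (36 / s\<^sup>2) * (C powr p * SF) ^ (h - 2))"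
    using SF(2) by (simp add: ennreal_mult[symmetric] ennreal_power power2_eq_square)
  finally show ?thesis .
qed

lemma nn_integral_qhat_powr_le:
  fixes C M SF :: real
  assumes q1: "\<And>x. q1 x \<ge> 0" and t: "t \<ge> 0" and p: "p > 1" and s: "0 < s" "s \<le> 1"
    and kernel: "\<And>n. n \<in> {1..L} \<Longrightarrow> (\<lambda>u. exp (t * enorm u) * qn q1 n u) summable_on UNIV
      \<and> (\<Sum>\<^sub>\<infinity>u. exp (t * enorm u) * qn q1 n u) \<le> C"
    and M: "\<And>z. \<bar>f z / w t z\<bar> \<le> M"
    and SF: "(\<integral>\<^sup>+z. \<bar>f z / w t z\<bar> powr p \<partial>count_space UNIV) = ennreal SF" "SF \<ge> 0"
    and idx: "{j, k, a, b} \<subseteq> {1..h}" "j \<noteq> k" "j \<notin> {a, b}" "a \<noteq> b"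
    and glue: "\<And>x. sim I x \<Longrightarrow> x j = x k"
  shows "(\<integral>\<^sup>+x. \<bar>qhat q1 h (\<lambda>z. \<bar>f z\<bar>) I L x * VV a b s x / WW h t x\<bar> powr p
           \<partial>count_space (PiE {1..h} (\<lambda>_. UNIV)))
       \<le> ennreal (real L powr p * (((C * M) powr p)\<^sup>2 * (36 / s\<^sup>2) * (C powr p * SF) ^ (h - 2)))"
proof -
  define B where "B = ((C * M) powr p)\<^sup>2 * (36 / s\<^sup>2) * (C powr p * SF) ^ (h - 2)"
  define a_n where "a_n n x = qI q1 h (\<lambda>z. \<bar>f z\<bar>) I n x * VV a b s x / WW h t x" for n x
  have a_n_nonneg: "a_n n x \<ge> 0" for n x
    by (simp add: a_n_def qI_def VV_def WW_def w_def prod_nonneg qf_abs_nonneg q1)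
  have "ennreal (\<bar>qhat q1 h (\<lambda>z. \<bar>f z\<bar>) I L x * VV a b s x / WW h t x\<bar> powr p)
      \<le> ennreal (real L powr (p - 1)) * (\<Sum>n\<in>{1..L}. ennreal (a_n n x powr p))" for x
  proof -
    have "qhat q1 h (\<lambda>z. \<bar>f z\<bar>) I L x * VV a b s x / WW h t x = (\<Sum>n\<in>{1..L}. a_n n x)"
      by (simp add: a_n_def qhat_def sum_distrib_right sum_divide_distrib)
    then have "ennreal (\<bar>qhat q1 h (\<lambda>z. \<bar>f z\<bar>) I L x * VV a b s x / WW h t x\<bar> powr p)
        \<le> ennreal (real L powr (p - 1) * (\<Sum>n\<in>{1..L}. a_n n x powr p))"
      using sum_powr_le[OF p, of "{1..L}" "\<lambda>n. a_n n x"] a_n_nonneg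
      by (intro ennreal_leI) (simp add: sum_nonneg)
    also have "\<dots> = ennreal (real L powr (p - 1)) * (\<Sum>n\<in>{1..L}. ennreal (a_n n x powr p))"
      by (simp add: ennreal_mult sum_ennreal sum_nonneg)
    finally show ?thesis .
  qed
  then have "(\<integral>\<^sup>+x. \<bar>qhat q1 h (\<lambda>z. \<bar>f z\<bar>) I L x * VV a b s x / WW h t x\<bar> powr p
           \<partial>count_space (PiE {1..h} (\<lambda>_. UNIV)))
      \<le> (\<integral>\<^sup>+x. ennreal (real L powr (p - 1)) * (\<Sum>n\<in>{1..L}. ennreal (a_n n x powr p))
           \<partial>count_space (PiE {1..h} (\<lambda>_. UNIV)))"
    by (rule nn_integral_mono)
  also have "\<dots> = ennreal (real L powr (p - 1))
      * (\<Sum>n\<in>{1..L}. \<integral>\<^sup>+x. a_n n x powr p \<partial>count_space (PiE {1..h} (\<lambda>_. UNIV)))"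
    by (simp add: nn_integral_cmult nn_integral_sum del: sum_ennreal)
  also have "\<dots> \<le> ennreal (real L powr (p - 1)) * (\<Sum>n\<in>{1..L}. ennreal B)"
    unfolding a_n_def B_def
    using nn_integral_qI_powr_le[OF q1 t p s _ _ M SF idx glue] kernel
    by (intro mult_left_mono sum_mono) auto
  also have "\<dots> = ennreal (real L powr p * B)"
    using powr_add[of "real L" "p - 1" 1]
    by (simp add: ennreal_mult[symmetric] ennreal_of_nat_eq_real_of_nat B_def SF(2) mult.assoc[symmetric])
  finally show ?thesis
    by (simp add: B_def)
qed

lemma lpnorm_eq_ennreal:
  assumes "(\<integral>\<^sup>+x. \<bar>g x\<bar> powr p \<partial>count_space A) = ennreal S" "S \<ge> 0"
  shows "lpnorm p A g = ennreal (S powr (1 / p))"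
  using assms by (simp add: lpnorm_def)

lemma lpnorm_le_ennreal:
  assumes "p > 0" "(\<integral>\<^sup>+x. \<bar>g x\<bar> powr p \<partial>count_space A) \<le> ennreal B" "B \<ge> 0"
  shows "lpnorm p A g \<le> ennreal (B powr (1 / p))"
proof -
  obtain S where S: "(\<integral>\<^sup>+x. \<bar>g x\<bar> powr p \<partial>count_space A) = ennreal S" "S \<ge> 0"
    using assms(2) by (cases "\<integral>\<^sup>+x. \<bar>g x\<bar> powr p \<partial>count_space A") (auto simp: top_unique)
  then have "S \<le> B"
    using assms(2,3) by simp
  then show ?thesis
    using assms(1) S by (simp add: lpnorm_eq_ennreal ennreal_leI powr_mono2)
qed

lemma linfnorm_lpnorm_bound_eq_top:
  fixes F :: "'a \<Rightarrow> real"
  assumes "R > 0" "h \<ge> 3"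
    and "linfnorm UNIV F = top \<or> (\<integral>\<^sup>+z. \<bar>F z\<bar> powr p \<partial>count_space UNIV) = top"
  shows "ennreal R * linfnorm UNIV F ^ 2 * lpnorm p UNIV F ^ (h - 2) = top"
proof -
  have "\<exists>z0. F z0 \<noteq> 0"
  proof (rule ccontr)
    assume "\<nexists>z0. F z0 \<noteq> 0"
    then have "F = (\<lambda>_. 0)"
      by auto
    then show False
      using assms(3) by (simp add: linfnorm_def)
  qed
  then obtain z0 where z0: "F z0 \<noteq> 0"
    by blast
  have "0 < ennreal \<bar>F z0\<bar>"
    using z0 by simp
  also have "\<dots> \<le> linfnorm UNIV F"
    unfolding linfnorm_def by (rule SUP_upper) simp
  finally have linf: "linfnorm UNIV F \<noteq> 0"
    by simp
  have lp: "lpnorm p UNIV F \<noteq> 0"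
  proof (cases "\<integral>\<^sup>+z. \<bar>F z\<bar> powr p \<partial>count_space UNIV")
    case (real S)
    have "ennreal (\<bar>F z0\<bar> powr p) \<le> (\<integral>\<^sup>+z. \<bar>F z\<bar> powr p \<partial>count_space UNIV)"
      by (rule nn_integral_ge_point) simp
    then have "0 < S"
      using real z0 by (smt (verit) ennreal_le_iff powr_gt_zero zero_less_abs_iff)
    then show ?thesis
      using real by (simp add: lpnorm_eq_ennreal)
  qed (simp add: lpnorm_def)
  show ?thesis
    using assms lp linf
    by (auto simp: ennreal_mult_eq_top_iff lpnorm_def power_eq_top_ennreal)
qed

lemma qhat_bound_root_eq:
  fixes p C M SF s L :: real
  assumes "p > 0" "C \<ge> 0" "M \<ge> 0" "SF \<ge> 0" "s > 0" "L \<ge> 0" "h \<ge> 2"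
  shows "(L powr p * (((C * M) powr p)\<^sup>2 * (36 / s\<^sup>2) * (C powr p * SF) ^ (h - 2))) powr (1 / p)
       = 36 powr (1 / p) * C ^ h * L / s powr (2 / p) * M\<^sup>2 * (SF powr (1 / p)) ^ (h - 2)"
proof -
  have root: "(x powr p) powr (1 / p) = x" if "x \<ge> 0" for x
    using that assms(1) by (simp add: powr_powr)
  have "(L powr p * (((C * M) powr p)\<^sup>2 * (36 / s\<^sup>2) * (C powr p * SF) ^ (h - 2))) powr (1 / p)
      = (L powr p) powr (1 / p) * (((C * M) powr p)\<^sup>2) powr (1 / p) * (36 / s\<^sup>2) powr (1 / p)
        * ((C powr p * SF) ^ (h - 2)) powr (1 / p)"
  proof -
    have "0 \<le> L powr p" "0 \<le> ((C * M) powr p)\<^sup>2" "0 \<le> 36 / s\<^sup>2" "0 \<le> (C powr p * SF) ^ (h - 2)"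
      using assms(4) by simp_all
    then show ?thesis
      by (simp only: powr_mult mult_nonneg_nonneg mult.assoc)
  qed
  also have "\<dots> = L * (C * M)\<^sup>2 * (36 powr (1 / p) / s powr (2 / p))
      * (C ^ (h - 2) * (SF powr (1 / p)) ^ (h - 2))"
    using assms powr_powr[of s 2 "1 / p"]
    by (simp add: root power_powr_eq powr_mult powr_divide power_mult_distrib)
  also have "\<dots> = 36 powr (1 / p) * (C ^ (h - 2) * C\<^sup>2) * L / s powr (2 / p) * M\<^sup>2
      * (SF powr (1 / p)) ^ (h - 2)"
    by (simp add: power_mult_distrib field_simps)
  also have "C ^ (h - 2) * C\<^sup>2 = C ^ h"
    using assms(7) by (metis le_add_diff_inverse2 power_add)
  finally show ?thesis .
qed

lemma lpnorm_qhat_le: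
  fixes C :: real
  assumes q1: "\<And>x. q1 x \<ge> 0" and t: "t \<ge> 0" and p: "p > 1" and s: "0 < s" "s \<le> 1"
    and h: "h \<ge> 3" and C: "C > 0"
    and kernel: "\<And>n. n \<in> {1..L} \<Longrightarrow> (\<lambda>u. exp (t * enorm u) * qn q1 n u) summable_on UNIV
      \<and> (\<Sum>\<^sub>\<infinity>u. exp (t * enorm u) * qn q1 n u) \<le> C"
    and idx: "{j, k, a, b} \<subseteq> {1..h}" "j \<noteq> k" "j \<notin> {a, b}" "a \<noteq> b"
    and glue: "\<And>x. sim I x \<Longrightarrow> x j = x k"
  shows "lpnorm p (PiE {1..h} (\<lambda>_. UNIV)) (\<lambda>x. qhat q1 h (\<lambda>z. \<bar>f z\<bar>) I L x * VV a b s x / WW h t x)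
       \<le> ennreal (36 powr (1 / p) * C ^ h * real L / s powr (2 / p))
         * linfnorm UNIV (\<lambda>z. f z / w t z) ^ 2 * lpnorm p UNIV (\<lambda>z. f z / w t z) ^ (h - 2)"
proof (cases "L = 0")
  case True
  then show ?thesis
    using p by (simp add: lpnorm_def qhat_def)
next
  case False
  define F where "F = (\<lambda>z. f z / w t z)"
  define R where "R = 36 powr (1 / p) * C ^ h * real L / s powr (2 / p)"
  have R: "R > 0"
    using C s False by (simp add: R_def)
  show ?thesis
  proof (cases "linfnorm UNIV F = top \<or> (\<integral>\<^sup>+z. \<bar>F z\<bar> powr p \<partial>count_space UNIV) = top")
    case True
    then show ?thesis
      using linfnorm_lpnorm_bound_eq_top[OF R h True] by (simp add: F_def R_def)
  next
    case False
    then obtain M SF where M: "linfnorm UNIV F = ennreal M" "M \<ge> 0"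
      and SF: "(\<integral>\<^sup>+z. \<bar>F z\<bar> powr p \<partial>count_space UNIV) = ennreal SF" "SF \<ge> 0"
      by (cases "linfnorm UNIV F"; cases "\<integral>\<^sup>+z. \<bar>F z\<bar> powr p \<partial>count_space UNIV") auto
    have F_le: "\<bar>F z\<bar> \<le> M" for z
      using SUP_upper[of z UNIV "\<lambda>z. ennreal \<bar>F z\<bar>"] M by (simp add: linfnorm_def)
    have "lpnorm p (PiE {1..h} (\<lambda>_. UNIV)) (\<lambda>x. qhat q1 h (\<lambda>z. \<bar>f z\<bar>) I L x * VV a b s x / WW h t x)
        \<le> ennreal ((real L powr p * (((C * M) powr p)\<^sup>2 * (36 / s\<^sup>2) * (C powr p * SF) ^ (h - 2)))
             powr (1 / p))"
      using p SF(2) C M(2)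
      by (intro lpnorm_le_ennreal
          nn_integral_qhat_powr_le[OF q1 t p s kernel F_le[unfolded F_def] SF[unfolded F_def] idx glue])
        simp_all
    also have "\<dots> = ennreal R * ennreal M ^ 2 * ennreal (SF powr (1 / p)) ^ (h - 2)"
      using qhat_bound_root_eq[of p C M SF s "real L" h] p C M(2) SF(2) s h R
      by (simp add: R_def ennreal_mult[symmetric] ennreal_power)
    also have "\<dots> = ennreal R * linfnorm UNIV F ^ 2 * lpnorm p UNIV F ^ (h - 2)"
      using M SF by (simp add: lpnorm_eq_ennreal)
    finally show ?thesis
      by (simp add: F_def R_def)
  qed
qed

theorem proposition4p20:
  fixes q1 :: "pt \<Rightarrow> real" and cc :: real
    and h :: nat and t s p :: real and L :: nat and f :: "pt \<Rightarrow> real"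
  assumes q1_nonneg: "\<And>x. q1 x \<ge> 0"
    and q1_prob: "(q1 has_sum 1) UNIV"
    and q1_sym: "\<And>x. q1 x = q1 (- x)"
    and q1_subgauss: "\<exists>c>0. \<forall>t::real. \<forall>a\<in>{1,2::nat}.
           (\<lambda>x. exp (t * coord a x) * q1 x) summable_on UNIV \<and>
           (\<Sum>\<^sub>\<infinity>x. exp (t * coord a x) * q1 x) \<le> exp (c * t\<^sup>2 / 2)"
    and cc_ge: "cc \<ge> 1"
    and cc1: "\<And>t n a. t \<ge> 0 \<Longrightarrow> n \<ge> 1 \<Longrightarrow> a \<in> {1,2} \<Longrightarrow>
           (\<lambda>x. exp (t * coord a x) * qn q1 n x) summable_on UNIV \<and>
           (\<Sum>\<^sub>\<infinity>x. exp (t * coord a x) * qn q1 n x) \<le> exp (cc * t\<^sup>2 * real n / 2)"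
    and cc2: "\<And>t n a. t \<ge> 0 \<Longrightarrow> n \<ge> 1 \<Longrightarrow> a \<in> {1,2} \<Longrightarrow>
           (\<lambda>x. exp (t * coord a x) * (qn q1 n x)\<^sup>2 / qn q1 (2 * n) (0, 0)) summable_on UNIV \<and>
           (\<Sum>\<^sub>\<infinity>x. exp (t * coord a x) * (qn q1 n x)\<^sup>2 / qn q1 (2 * n) (0, 0))
             \<le> exp (cc * t\<^sup>2 * real n / 2)"
    and cc3: "\<And>t n. t \<ge> 0 \<Longrightarrow> n \<ge> 1 \<Longrightarrow>
           (\<lambda>x. exp (t * enorm x) * qn q1 n x) summable_on UNIV \<and>
           (\<Sum>\<^sub>\<infinity>x. exp (t * enorm x) * qn q1 n x) \<le> cc * exp (2 * cc * t\<^sup>2 * real n)"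
    and cc4: "\<And>t n x. t \<ge> 0 \<Longrightarrow> n \<ge> 1 \<Longrightarrow>
           exp (t * enorm x) * qn q1 n x \<le> cc * exp (2 * cc * t\<^sup>2 * real n) / real n"
    and h3: "h \<ge> 3"
    and t0: "t \<ge> 0"
    and s01: "0 < s" "s \<le> 1"
    and p1: "p > 1"
  shows "\<forall>a\<in>{1..h}. \<forall>b\<in>{1..h}. \<forall>I. a \<noteq> b \<longrightarrow> partition_on {1..h} I \<longrightarrow> I \<noteq> singletons h
           \<longrightarrow> \<not> (\<exists>B\<in>I. {a, b} \<subseteq> B) \<longrightarrow>
           lpnorm p (PiE {1..h} (\<lambda>_. UNIV))
             (\<lambda>x. qhat q1 h (\<lambda>z. \<bar>f z\<bar>) I L x * VV a b s x / WW h t x)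
           \<le> ennreal (36 powr (1 / p) * (cc * exp (2 * cc * t\<^sup>2 * real L)) ^ h
                       * real L / s powr (2 / p))
             * linfnorm UNIV (\<lambda>z. f z / w t z) ^ 2
             * lpnorm p UNIV (\<lambda>z. f z / w t z) ^ (h - 2)"
proof (intro ballI allI impI)
  fix a b I
  assume ab: "a \<in> {1..h}" "b \<in> {1..h}" "a \<noteq> b" and part: "partition_on {1..h} I"
    and not_singletons: "I \<noteq> singletons h" and apart: "\<not> (\<exists>B\<in>I. {a, b} \<subseteq> B)"
  obtain j k where "j \<in> {1..h}" "k \<in> {1..h}" "j \<noteq> k" "j \<notin> {a, b}"
    and glue: "\<And>x. sim I x \<Longrightarrow> x j = x k"
    using partition_glued_index[OF part not_singletons apart] by blast
  then have idx: "{j, k, a, b} \<subseteq> {1..h}" "j \<noteq> k" "j \<notin> {a, b}" "a \<noteq> b"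
    using ab by auto
  define C where "C = cc * exp (2 * cc * t\<^sup>2 * real L)"
  have "C > 0"
    using cc_ge by (simp add: C_def)
  have kernel: "(\<lambda>u. exp (t * enorm u) * qn q1 n u) summable_on UNIV
      \<and> (\<Sum>\<^sub>\<infinity>u. exp (t * enorm u) * qn q1 n u) \<le> C" if "n \<in> {1..L}" for n
  proof -
    have "cc * exp (2 * cc * t\<^sup>2 * real n) \<le> C"
      using that cc_ge by (simp add: C_def mult_left_mono)
    moreover have "n \<ge> 1"
      using that by simp
    ultimately show ?thesis
      using cc3[OF t0] by (meson order.trans)
  qed
  show "lpnorm p (PiE {1..h} (\<lambda>_. UNIV))
             (\<lambda>x. qhat q1 h (\<lambda>z. \<bar>f z\<bar>) I L x * VV a b s x / WW h t x)
           \<le> ennreal (36 powr (1 / p) * (cc * exp (2 * cc * t\<^sup>2 * real L)) ^ h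
                       * real L / s powr (2 / p))
             * linfnorm UNIV (\<lambda>z. f z / w t z) ^ 2
             * lpnorm p UNIV (\<lambda>z. f z / w t z) ^ (h - 2)"
    using lpnorm_qhat_le[OF q1_nonneg t0 p1 s01 h3 \<open>C > 0\<close> kernel idx glue]
    unfolding C_def .
qed

end
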